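(* Let $k,m\in\mathbb{N}$ with $k>m$, $\frac{2k+1}{4m}<1$ and $\gcd(4m,2k+1)=1$. For $s=0,\dots,4m-1$ and $n=0,\dots,2k$ put $\widetilde X_{sn}=\frac{s}{4m}-\frac{n}{2k+1}$, $\widetilde\Phi_{sn}(0,0)=\sum_{l\in\mathbb{Z}}Q_2\big(2(l+\widetilde X_{sn})\big)$ with $Q_2(x)=(1-|x|)\chi_{[-1,1]}(x)$, and $\widetilde A_{sn}=\widetilde\Phi_{sn}(0,0)-\widetilde\Phi_{s,2k+1-n}(0,0)$ for $n=1,\dots,k$. Then (i) $\widetilde A_{0n}=\widetilde A_{2m,n}=0$ for $n=1,\dots,k$; (ii) $\widetilde A_{s,n}=-\widetilde A_{4m-s,n}$ for $s=1,\dots,2m-1$ and $n=1,\dots,k$.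
   Context: This corresponds to the Gabor system of $Q_2$ with $a=\frac{1}{2m}$, $b=\frac{2k+1}{2}$, $ab=\frac{2k+1}{4m}$. *)

theory Defs
  imports "HOL-Analysis.Analysis"
begin

definition Q2 :: "real \<Rightarrow> real" where
  "Q2 x = (if \<bar>x\<bar> \<le> 1 then 1 - \<bar>x\<bar> else 0)"

definition Xt :: "nat \<Rightarrow> nat \<Rightarrow> nat \<Rightarrow> nat \<Rightarrow> real" where
  "Xt k m s n = real s / (4 * real m) - real n / (2 * real k + 1)"

definition Phit :: "nat \<Rightarrow> nat \<Rightarrow> nat \<Rightarrow> nat \<Rightarrow> real" where
  "Phit k m s n = (\<Sum>\<^sub>\<infinity> l::int. Q2 (2 * (real_of_int l + Xt k m s n)))"

definition At :: "nat \<Rightarrow> nat \<Rightarrow> nat \<Rightarrow> nat \<Rightarrow> real" where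
  "At k m s n = Phit k m s n - Phit k m s (2 * k + 1 - n)"

end

theory Submission
  imports Defs
begin

(* Phit k m s n is the 1-periodization P of the even function y \<mapsto> Q2 (2 y) at Xt k m s n,
   and Xt k m s (2k+1-n) is Xt k m s n + 2n/(2k+1) - 1.  Hence At k m s n = P (a - b) - P (a + b)
   with a = s/(4m), b = n/(2k+1), and both identities follow from P (1 - x) = P x = P (-x) alone. *)

definition periodize :: "(real \<Rightarrow> 'a::{comm_monoid_add, t2_space}) \<Rightarrow> real \<Rightarrow> 'a" where
  "periodize f x = (\<Sum>\<^sub>\<infinity> l::int. f (of_int l + x))"

lemma periodize_plus_one: "periodize f (x + 1) = periodize f x"
proof -
  have "bij_betw (\<lambda>l::int. l + 1) UNIV UNIV"
    by (rule bij_betwI[where g = "\<lambda>l. l - 1"]) auto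
  then have "(\<Sum>\<^sub>\<infinity> l::int. f (of_int (l + 1) + x)) = periodize f x"
    unfolding periodize_def by (rule infsum_reindex_bij_betw)
  then show ?thesis
    by (simp add: periodize_def add_ac)
qed

lemma periodize_minus:
  assumes even: "\<And>y. f (- y) = f y"
  shows "periodize f (- x) = periodize f x"
proof -
  have "bij_betw (\<lambda>l::int. - l) UNIV UNIV"
    by (rule bij_betwI[where g = uminus]) auto
  then have "(\<Sum>\<^sub>\<infinity> l::int. f (of_int (- l) + x)) = periodize f x"
    unfolding periodize_def by (rule infsum_reindex_bij_betw)
  moreover have "f (of_int (- l) + x) = f (of_int l + - x)" for l :: int
    using even[of "of_int l + - x"] by simp
  ultimately show ?thesis
    by (simp add: periodize_def)
qed

lemma periodize_one_minus:
  assumes "\<And>y. f (- y) = f y"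
  shows "periodize f (1 - x) = periodize f x"
  using periodize_plus_one[of f "- x"] periodize_minus[of f x, OF assms] by simp

lemma periodize_Q2_minus: "periodize (\<lambda>y. Q2 (2 * y)) (- x) = periodize (\<lambda>y. Q2 (2 * y)) x"
  by (rule periodize_minus) (simp add: Q2_def)

lemma periodize_Q2_one_minus: "periodize (\<lambda>y. Q2 (2 * y)) (1 - x) = periodize (\<lambda>y. Q2 (2 * y)) x"
  by (rule periodize_one_minus) (simp add: Q2_def)

lemma Phit_eq_periodize: "Phit k m s n = periodize (\<lambda>y. Q2 (2 * y)) (Xt k m s n)"
  by (simp add: Phit_def periodize_def)

lemma At_eq_periodize:
  fixes k m s n :: nat
  assumes "n \<le> 2 * k + 1"
  defines "P \<equiv> periodize (\<lambda>y. Q2 (2 * y))"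
    and "a \<equiv> real s / (4 * real m)" and "b \<equiv> real n / (2 * real k + 1)"
  shows "At k m s n = P (a - b) - P (a + b)"
proof -
  have "Xt k m s (2 * k + 1 - n) = (a + b) - 1"
    using assms(1) by (simp add: a_def b_def Xt_def of_nat_diff field_simps)
  then have "Phit k m s (2 * k + 1 - n) = P (a + b - 1 + 1)"
    by (simp only: Phit_eq_periodize P_def periodize_plus_one)
  then show ?thesis
    by (simp add: At_def Phit_eq_periodize Xt_def P_def a_def b_def)
qed

lemma At_zero:
  assumes "n \<le> 2 * k + 1"
  shows "At k m 0 n = 0"
  using periodize_Q2_minus by (simp add: At_eq_periodize[OF assms])

lemma At_reflect:
  assumes "n \<le> 2 * k + 1" and "m > 0" and "s \<le> 4 * m"
  shows "At k m (4 * m - s) n = - At k m s n"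
proof -
  define P where "P = periodize (\<lambda>y. Q2 (2 * y))"
  define a where "a = real s / (4 * real m)"
  define b where "b = real n / (2 * real k + 1)"
  have "real (4 * m - s) / (4 * real m) = 1 - a"
    using assms(2,3) by (simp add: a_def of_nat_diff field_simps)
  then have "At k m (4 * m - s) n = P (1 - a - b) - P (1 - a + b)"
    unfolding At_eq_periodize[OF assms(1)] P_def b_def by simp
  also have "\<dots> = P (1 - (a + b)) - P (1 - (a - b))"
    by (simp add: algebra_simps)
  also have "\<dots> = P (a + b) - P (a - b)"
    by (simp only: P_def periodize_Q2_one_minus)
  also have "\<dots> = - At k m s n"
    by (simp add: At_eq_periodize[OF assms(1)] P_def a_def b_def)
  finally show ?thesis .
qed

theorem lemma3p15:
  fixes k m :: nat
  assumes "k > m"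
    and "(2 * real k + 1) / (4 * real m) < 1"
    and "gcd (4 * m) (2 * k + 1) = 1"
  shows "(\<forall>n\<in>{1..k}. At k m 0 n = 0 \<and> At k m (2 * m) n = 0)
    \<and> (\<forall>s\<in>{1..2 * m - 1}. \<forall>n\<in>{1..k}. At k m s n = - At k m (4 * m - s) n)"
proof (intro conjI ballI)
  fix n assume "n \<in> {1..k}"
  then have n: "n \<le> 2 * k + 1" by simp
  show "At k m 0 n = 0"
    using At_zero[OF n] .
  show "At k m (2 * m) n = 0"
  proof (cases "m = 0")
    case True
    then show ?thesis using At_zero[OF n] by simp
  next
    case False
    then show ?thesis using At_reflect[OF n, of m "2 * m"] by simp
  qed
next
  fix s n assume "s \<in> {1..2 * m - 1}" and "n \<in> {1..k}"
  then have n: "n \<le> 2 * k + 1" and "m > 0" and "s \<le> 4 * m" by auto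
  then show "At k m s n = - At k m (4 * m - s) n"
    using At_reflect[OF n, of m s] by simp
qed

end
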